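(* Assume $M$ has genus zero, let $a\in(0,1)$, $b=1-a$, and $p=\frac{q'}{q'+a^{-1}-1}$. Let $\omega\subseteq\mathsf E$ be distributed according to the $\mathrm{FK}(qq')$ random cluster model on $\mathsf G$ with parameter $p$ and free boundary conditions, i.e. $\propto (qq')^{k(\omega)}p^{|\omega|}(1-p)^{|\mathsf E\setminus\omega|}$. Independently assign to each cluster of $\omega$ a spin chosen uniformly from $Q$, and to each cluster of $\omega^\dagger$ (in $\mathsf G^*$) a spin chosen uniformly from $Q'$, all independently, and let $\sigma:\mathsf V\to Q$, $\sigma':\mathsf U\to Q'$ be the resulting spin configurations. Then $(\sigma,\sigma')$ has law $\mathbf P(\sigma,\sigma')\propto a^{|\eta(\sigma')|}b^{|\eta(\sigma)|}$ on $\Sigma$.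
   Context: $M$ is the sphere or the plane. Let $\mathsf G=(\mathsf V,\mathsf E)$ be a finite connected graph embedded in $M$ with all faces topological discs, and $\mathsf G^*=(\mathsf U,\mathsf E^* )$ its embedded dual ($\mathsf U$ = faces of $\mathsf G$); $e^*$ is the dual edge crossing $e$, $\xi^*=\{e^*:e\in\xi\}$, and for $\xi\subseteq\mathsf E$, $\xi^\dagger=\mathsf E^*\setminus\xi^*$. Fix integers $q,q'\ge1$ and finite $Q,Q'\subset\mathbb C$ with $Q=-Q$, $Q'=-Q'$, $|Q|=q$, $|Q'|=q'$. For $\sigma:\mathsf V\to Q$, $\eta(\sigma)\subseteq\mathsf E^*$ is the set of $e^*$ whose primal $e$ has endpoints with different $\sigma$-values; for $\sigma':\mathsf U\to Q'$, $\eta(\sigma')\subseteq\mathsf E$ is the set of $e$ whose dual $e^*$ has endpoints with different $\sigma'$-values. $\Sigma=\{(\sigma,\sigma'):\eta(\sigma)^*\cap\eta(\sigma')=\emptyset\}$. A cluster of $\omega$ is a connected component of $(\mathsf V,\omega)$ (isolated vertices included), $k(\omega)$ their number; clusters of $\omega^\dagger$ are connected components of $(\mathsf U,\omega^\dagger)$. *)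

theory Defs
  imports Complex_Main "HOL-Library.FuncSet"
begin

text \<open>A connected graph cellularly embedded in an orientable surface is encoded by a
combinatorial map: a finite set of darts D (half-edges), a fixed-point-free involution
alpha on D (the two darts of an edge) and a permutation rho of D (cyclic order of darts
around each vertex).  Vertices are rho-orbits, edges are alpha-orbits, faces are orbits
of rho o alpha.  The edge {d, alpha d} joins the vertices orb rho d and orb rho (alpha d);
its dual edge joins the faces of d and of alpha d.\<close>

definition orb :: "('d \<Rightarrow> 'd) \<Rightarrow> 'd \<Rightarrow> 'd set" where
  "orb f d = range (\<lambda>n. (f ^^ n) d)"

definition map_verts :: "'d set \<Rightarrow> ('d \<Rightarrow> 'd) \<Rightarrow> 'd set set" where
  "map_verts D rho = orb rho ` D"

definition face_of :: "('d \<Rightarrow> 'd) \<Rightarrow> ('d \<Rightarrow> 'd) \<Rightarrow> 'd \<Rightarrow> 'd set" where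
  "face_of alpha rho d = orb (rho \<circ> alpha) d"

definition map_faces :: "'d set \<Rightarrow> ('d \<Rightarrow> 'd) \<Rightarrow> ('d \<Rightarrow> 'd) \<Rightarrow> 'd set set" where
  "map_faces D alpha rho = face_of alpha rho ` D"

definition map_edges :: "'d set \<Rightarrow> ('d \<Rightarrow> 'd) \<Rightarrow> 'd set set" where
  "map_edges D alpha = (\<lambda>d. {d, alpha d}) ` D"

definition comb_map :: "'d set \<Rightarrow> ('d \<Rightarrow> 'd) \<Rightarrow> ('d \<Rightarrow> 'd) \<Rightarrow> bool" where
  "comb_map D alpha rho \<longleftrightarrow>
     finite D \<and> D \<noteq> {} \<and> bij_betw alpha D D \<and> bij_betw rho D D \<and>
     (\<forall>d\<in>D. alpha d \<noteq> d \<and> alpha (alpha d) = d) \<and>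
     (\<forall>d\<in>D. \<forall>d'\<in>D. (d, d') \<in> ({(x, alpha x) | x. x \<in> D} \<union> {(x, rho x) | x. x \<in> D})\<^sup>*)"

definition genus_zero :: "'d set \<Rightarrow> ('d \<Rightarrow> 'd) \<Rightarrow> ('d \<Rightarrow> 'd) \<Rightarrow> bool" where
  "genus_zero D alpha rho \<longleftrightarrow>
     int (card (map_verts D rho)) - int (card (map_edges D alpha))
       + int (card (map_faces D alpha rho)) = 2"

definition primal_rel :: "'d set \<Rightarrow> ('d \<Rightarrow> 'd) \<Rightarrow> ('d \<Rightarrow> 'd) \<Rightarrow> 'd set set \<Rightarrow> ('d set \<times> 'd set) set" where
  "primal_rel D alpha rho \<omega> =
     {(orb rho d, orb rho (alpha d)) | d. d \<in> D \<and> {d, alpha d} \<in> \<omega>}"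

text \<open>Adjacency of faces via the dual edges of omega-dagger = E* minus omega*.\<close>
definition dual_rel :: "'d set \<Rightarrow> ('d \<Rightarrow> 'd) \<Rightarrow> ('d \<Rightarrow> 'd) \<Rightarrow> 'd set set \<Rightarrow> ('d set \<times> 'd set) set" where
  "dual_rel D alpha rho \<omega> =
     {(face_of alpha rho d, face_of alpha rho (alpha d)) | d. d \<in> D \<and> {d, alpha d} \<notin> \<omega>}"

definition clusters :: "'d set \<Rightarrow> ('d \<Rightarrow> 'd) \<Rightarrow> ('d \<Rightarrow> 'd) \<Rightarrow> 'd set set \<Rightarrow> 'd set set set" where
  "clusters D alpha rho \<omega> = map_verts D rho // ((primal_rel D alpha rho \<omega>)\<^sup>*)"

definition dual_clusters :: "'d set \<Rightarrow> ('d \<Rightarrow> 'd) \<Rightarrow> ('d \<Rightarrow> 'd) \<Rightarrow> 'd set set \<Rightarrow> 'd set set set" where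
  "dual_clusters D alpha rho \<omega> = map_faces D alpha rho // ((dual_rel D alpha rho \<omega>)\<^sup>*)"

text \<open>eta(sigma), indexed by primal edges: the edges e whose endpoints carry different
sigma values (eta(sigma) itself is the set of the corresponding dual edges e*).\<close>
definition eta_primal :: "'d set \<Rightarrow> ('d \<Rightarrow> 'd) \<Rightarrow> ('d \<Rightarrow> 'd) \<Rightarrow> ('d set \<Rightarrow> complex) \<Rightarrow> 'd set set" where
  "eta_primal D alpha rho \<sigma> =
     {{d, alpha d} | d. d \<in> D \<and> \<sigma> (orb rho d) \<noteq> \<sigma> (orb rho (alpha d))}"

text \<open>eta(sigma'): the primal edges e whose dual edge e* has endpoints with different sigma'.\<close>
definition eta_dual :: "'d set \<Rightarrow> ('d \<Rightarrow> 'd) \<Rightarrow> ('d \<Rightarrow> 'd) \<Rightarrow> ('d set \<Rightarrow> complex) \<Rightarrow> 'd set set" where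
  "eta_dual D alpha rho \<sigma>' =
     {{d, alpha d} | d. d \<in> D \<and> \<sigma>' (face_of alpha rho d) \<noteq> \<sigma>' (face_of alpha rho (alpha d))}"

definition in_Sigma :: "'d set \<Rightarrow> ('d \<Rightarrow> 'd) \<Rightarrow> ('d \<Rightarrow> 'd) \<Rightarrow> ('d set \<Rightarrow> complex) \<Rightarrow> ('d set \<Rightarrow> complex) \<Rightarrow> bool" where
  "in_Sigma D alpha rho \<sigma> \<sigma>' \<longleftrightarrow> eta_primal D alpha rho \<sigma> \<inter> eta_dual D alpha rho \<sigma>' = {}"

definition fk_weight :: "'d set \<Rightarrow> ('d \<Rightarrow> 'd) \<Rightarrow> ('d \<Rightarrow> 'd) \<Rightarrow> real \<Rightarrow> real \<Rightarrow> 'd set set \<Rightarrow> real" where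
  "fk_weight D alpha rho Q p \<omega> =
     Q ^ card (clusters D alpha rho \<omega>) * p ^ card \<omega> * (1 - p) ^ card (map_edges D alpha - \<omega>)"

definition fk_prob :: "'d set \<Rightarrow> ('d \<Rightarrow> 'd) \<Rightarrow> ('d \<Rightarrow> 'd) \<Rightarrow> real \<Rightarrow> real \<Rightarrow> 'd set set \<Rightarrow> real" where
  "fk_prob D alpha rho Q p \<omega> =
     fk_weight D alpha rho Q p \<omega> / (\<Sum>\<omega>'\<in>Pow (map_edges D alpha). fk_weight D alpha rho Q p \<omega>')"

definition const_on_clusters :: "('d set \<Rightarrow> complex) \<Rightarrow> 'd set set set \<Rightarrow> bool" where
  "const_on_clusters \<sigma> C \<longleftrightarrow> (\<forall>c\<in>C. \<forall>x\<in>c. \<forall>y\<in>c. \<sigma> x = \<sigma> y)"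

text \<open>Probability that independent uniform spins from a set of size n on the clusters C
produce the configuration sigma (given sigma takes values in the spin set).\<close>
definition cluster_spin_prob :: "nat \<Rightarrow> 'd set set set \<Rightarrow> ('d set \<Rightarrow> complex) \<Rightarrow> real" where
  "cluster_spin_prob n C \<sigma> = (if const_on_clusters \<sigma> C then 1 / real n ^ card C else 0)"

definition coupled_law :: "'d set \<Rightarrow> ('d \<Rightarrow> 'd) \<Rightarrow> ('d \<Rightarrow> 'd) \<Rightarrow> nat \<Rightarrow> nat \<Rightarrow> real
     \<Rightarrow> ('d set \<Rightarrow> complex) \<Rightarrow> ('d set \<Rightarrow> complex) \<Rightarrow> real" where
  "coupled_law D alpha rho q q' p \<sigma> \<sigma>' =
     (\<Sum>\<omega>\<in>Pow (map_edges D alpha).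
        fk_prob D alpha rho (real q * real q') p \<omega>
        * cluster_spin_prob q (clusters D alpha rho \<omega>) \<sigma>
        * cluster_spin_prob q' (dual_clusters D alpha rho \<omega>) \<sigma>')"

end

theory Submission
  imports Defs
begin

(* With p = q'a/(q'a + b), the FK(qq') weight of omega is, up to a factor independent of omega,
   q^k(omega) q'^k(omega-dagger) a^|omega| b^|E - omega|: on the sphere Euler's relation
   k(omega-dagger) + |V| = k(omega) + |omega| + 1 holds for every omega.  In the joint law of
   (sigma, sigma') the factors q^k and q'^k cancel against the probabilities of the uniform cluster
   spins, and since sigma is constant on the clusters of omega iff omega avoids eta(sigma), and
   sigma' is constant on the dual clusters iff eta(sigma') is contained in omega, what remains is
   the sum of a^|omega| b^|E - omega| over eta(sigma') <= omega <= E - eta(sigma).  As a + b = 1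
   this binomial sum is a^|eta(sigma')| b^|eta(sigma)| when the two sets are disjoint and 0
   otherwise.  The same computation summed over all spin pairs identifies the normalisation.

   Euler's relation follows because k(omega-dagger) - k(omega) - |omega| cannot increase when an
   edge is added (the edge never both merges two clusters and splits a dual cluster) and takes
   the value 1 - |V| both at the empty set and, by genus zero, at E. *)

lemma funpow_periodic:
  assumes "finite D" "bij_betw f D D" "x \<in> D"
  obtains n where "n > 0" "(f ^^ n) x = x"
proof -
  have iter_in: "(f ^^ k) x \<in> D" for k
    using bij_betw_apply[OF bij_betw_funpow[OF assms(2)] assms(3)] .
  have "\<not> inj (\<lambda>k. (f ^^ k) x)"
  proof
    assume "inj (\<lambda>k. (f ^^ k) x)"
    moreover have "finite (range (\<lambda>k. (f ^^ k) x))"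
      by (rule finite_subset[OF _ assms(1)]) (use iter_in in auto)
    ultimately show False using finite_imageD by fastforce
  qed
  then obtain i j where "i < j" and ij: "(f ^^ i) x = (f ^^ j) x"
  proof -
    from \<open>\<not> inj (\<lambda>k. (f ^^ k) x)\<close> obtain i j where "i \<noteq> j" "(f ^^ i) x = (f ^^ j) x"
      unfolding inj_def by blast
    then show thesis using that[of i j] that[of j i] by (cases "i < j") auto
  qed
  have "(f ^^ i) ((f ^^ (j - i)) x) = (f ^^ (i + (j - i))) x"
    unfolding funpow_add by simp
  also have "\<dots> = (f ^^ i) x"
    using \<open>i < j\<close> ij by simp
  finally have "(f ^^ (j - i)) x = x"
    by (rule inj_onD[OF bij_betw_imp_inj_on[OF bij_betw_funpow[OF assms(2)]] _ iter_in assms(3)])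
  with \<open>i < j\<close> show thesis using that[of "j - i"] by simp
qed

lemma orb_funpow_subset: "orb f ((f ^^ n) x) \<subseteq> orb f x"
proof
  fix y assume "y \<in> orb f ((f ^^ n) x)"
  then obtain m where "y = (f ^^ m) ((f ^^ n) x)" unfolding orb_def by blast
  then have "y = (f ^^ (m + n)) x" unfolding funpow_add by simp
  then show "y \<in> orb f x" unfolding orb_def by blast
qed

lemma apply_in_orb: "f x \<in> orb f x"
  unfolding orb_def by (rule range_eqI[of _ _ 1]) simp

lemma orb_eq_if_mem:
  assumes "finite D" "bij_betw f D D" "x \<in> D" "y \<in> orb f x"
  shows "orb f y = orb f x"
proof
  obtain m where y: "y = (f ^^ m) x" using assms(4) unfolding orb_def by blast
  then show "orb f y \<subseteq> orb f x" using orb_funpow_subset by simp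
  obtain n where "n > 0" "(f ^^ n) x = x" using funpow_periodic[OF assms(1-3)] .
  then have "((f ^^ n) ^^ k) x = x" for k
    by (induction k) simp_all
  then have "x = (f ^^ (n * m)) x" by (simp add: funpow_mult)
  also have "n * m = n * m - m + m"
    using \<open>n > 0\<close> by simp
  also have "(f ^^ (n * m - m + m)) x = (f ^^ (n * m - m)) y"
    unfolding y funpow_add by simp
  finally show "orb f x \<subseteq> orb f y" using orb_funpow_subset by metis
qed

lemma rtrancl_Image_subset:
  assumes "R \<subseteq> V \<times> V" "z \<in> V"
  shows "R\<^sup>* `` {z} \<subseteq> V"
proof -
  have "R\<^sup>* `` V = V"
    by (rule Image_closed_trancl) (use assms(1) in blast)
  then show ?thesis using assms(2) by blast
qed

lemma sym_rtrancl_Image_eq: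
  assumes "sym R" "y \<in> R\<^sup>* `` {x}"
  shows "R\<^sup>* `` {y} = R\<^sup>* `` {x}"
proof -
  have xy: "(x, y) \<in> R\<^sup>*" using assms(2) by simp
  then have yx: "(y, x) \<in> R\<^sup>*" using sym_rtrancl[OF assms(1)] by (rule symD[rotated])
  show ?thesis using rtrancl_trans[OF xy] rtrancl_trans[OF yx] by blast
qed

lemma rtrancl_sym_insert_pair:
  fixes R :: "'a rel" and x y :: 'a
  assumes "sym R"
  defines "M \<equiv> R\<^sup>* `` {x, y}"
  shows "(R \<union> {(x, y), (y, x)})\<^sup>* = R\<^sup>* \<union> M \<times> M"
proof (rule equalityI)
  let ?R' = "R \<union> {(x, y), (y, x)}" and ?T = "R\<^sup>* \<union> M \<times> M"
  have symR: "(v, u) \<in> R\<^sup>*" if "(u, v) \<in> R\<^sup>*" for u v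
    using sym_rtrancl[OF assms(1)] that by (rule symD)
  have M_closed: "v \<in> M" if "u \<in> M" "(u, v) \<in> R\<^sup>*" for u v
    using that rtrancl_trans[OF _ that(2)] unfolding M_def by blast
  have "trans ?T"
  proof (rule transI)
    fix u v w assume uv: "(u, v) \<in> ?T" and vw: "(v, w) \<in> ?T"
    show "(u, w) \<in> ?T"
    proof (cases "(u, v) \<in> R\<^sup>* \<and> (v, w) \<in> R\<^sup>*")
      case True
      then show ?thesis using rtrancl_trans[of u v R w] by blast
    next
      case False
      then have "v \<in> M" using uv vw by blast
      then have "u \<in> M" "w \<in> M" using uv vw M_closed symR by blast+
      then show ?thesis by blast
    qed
  qed
  have "?R' \<subseteq> ?T" unfolding M_def by auto
  show "?R'\<^sup>* \<subseteq> ?T"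
  proof (rule subrelI)
    fix u v assume "(u, v) \<in> ?R'\<^sup>*"
    then show "(u, v) \<in> ?T"
    proof (induction rule: rtrancl_induct)
      case base
      then show ?case by simp
    next
      case (step v w)
      then have "(v, w) \<in> ?T" using \<open>?R' \<subseteq> ?T\<close> by blast
      then show ?case by (rule transD[OF \<open>trans ?T\<close> step.IH])
    qed
  qed
  have sub: "R\<^sup>* \<subseteq> ?R'\<^sup>*" by (rule rtrancl_mono) blast
  have xy: "(x, y) \<in> ?R'\<^sup>*" "(y, x) \<in> ?R'\<^sup>*" by auto
  have to_x: "(u, x) \<in> ?R'\<^sup>* \<and> (x, u) \<in> ?R'\<^sup>*" if "u \<in> M" for u
  proof -
    from that consider "(x, u) \<in> R\<^sup>*" | "(y, u) \<in> R\<^sup>*" unfolding M_def by blast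
    then show ?thesis
    proof cases
      case 1
      then show ?thesis using sub symR by blast
    next
      case 2
      then have "(u, y) \<in> ?R'\<^sup>*" "(y, u) \<in> ?R'\<^sup>*" using sub symR by blast+
      then show ?thesis using rtrancl_trans[OF _ xy(2)] rtrancl_trans[OF xy(1)] by blast
    qed
  qed
  have "M \<times> M \<subseteq> ?R'\<^sup>*"
  proof (rule subrelI)
    fix u v assume "(u, v) \<in> M \<times> M"
    then show "(u, v) \<in> ?R'\<^sup>*" using to_x rtrancl_trans[of u x] by blast
  qed
  with sub show "?T \<subseteq> ?R'\<^sup>*" by blast
qed

lemma rtrancl_insert_pair_absorb:
  assumes "sym R" "(x, y) \<in> R\<^sup>*"
  shows "(R \<union> {(x, y), (y, x)})\<^sup>* = R\<^sup>*"
proof (rule equalityI)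
  have "(y, x) \<in> R\<^sup>*" using sym_rtrancl[OF assms(1)] assms(2) by (rule symD)
  with assms(2) have "R \<union> {(x, y), (y, x)} \<subseteq> R\<^sup>*" by blast
  then show "(R \<union> {(x, y), (y, x)})\<^sup>* \<subseteq> R\<^sup>*"
    using rtrancl_subset_rtrancl[of _ R] by simp
  show "R\<^sup>* \<subseteq> (R \<union> {(x, y), (y, x)})\<^sup>*" by (rule rtrancl_mono) blast
qed

lemma quotient_eq_image: "V // r = (\<lambda>z. r `` {z}) ` V"
  unfolding quotient_def by auto

lemma card_quotient_rtrancl_le_insert_pair:
  assumes "finite V" "R \<subseteq> V \<times> V" "sym R" "x \<in> V" "y \<in> V"
  shows "card (V // R\<^sup>*) \<le> card (V // (R \<union> {(x, y), (y, x)})\<^sup>*) + 1"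
proof -
  define M where "M = R\<^sup>* `` {x, y}"
  define W where "W = (\<lambda>z. R\<^sup>* `` {z}) ` (V - M)"
  have M_closed: "R\<^sup>* `` {z} \<subseteq> M" if "z \<in> M" for z
  proof
    fix w assume "w \<in> R\<^sup>* `` {z}"
    then have "(z, w) \<in> R\<^sup>*" by simp
    with that show "w \<in> M" unfolding M_def using rtrancl_trans[of _ z R w] by blast
  qed
  have "(R \<union> {(x, y), (y, x)})\<^sup>* `` {z} = (if z \<in> M then M else R\<^sup>* `` {z})" for z
    using M_closed[of z] unfolding rtrancl_sym_insert_pair[OF assms(3)] M_def by auto
  then have "V // (R \<union> {(x, y), (y, x)})\<^sup>* = insert M W"
    using assms(4) unfolding quotient_eq_image W_def M_def by auto
  moreover have "M \<notin> W"
  proof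
    assume "M \<in> W"
    then obtain z where "z \<notin> M" "M = R\<^sup>* `` {z}" unfolding W_def by blast
    then show False by simp
  qed
  moreover have "finite W"
    unfolding W_def using assms(1) by simp
  ultimately have "card (V // (R \<union> {(x, y), (y, x)})\<^sup>*) = card W + 1"
    by simp
  have "V // R\<^sup>* \<subseteq> {R\<^sup>* `` {x}, R\<^sup>* `` {y}} \<union> W"
  proof
    fix C assume "C \<in> V // R\<^sup>*"
    then obtain z where "z \<in> V" "C = R\<^sup>* `` {z}" unfolding quotient_eq_image by blast
    then show "C \<in> {R\<^sup>* `` {x}, R\<^sup>* `` {y}} \<union> W"
      using sym_rtrancl_Image_eq[OF assms(3)] unfolding W_def M_def by blast
  qed
  then have "card (V // R\<^sup>*) \<le> card ({R\<^sup>* `` {x}, R\<^sup>* `` {y}} \<union> W)"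
    using \<open>finite W\<close> by (intro card_mono) auto
  also have "\<dots> \<le> card {R\<^sup>* `` {x}, R\<^sup>* `` {y}} + card W"
    by (rule card_Un_le)
  also have "card {R\<^sup>* `` {x}, R\<^sup>* `` {y}} \<le> 2"
    by (simp add: card_insert_if)
  finally show ?thesis
    using \<open>card (V // (R \<union> {(x, y), (y, x)})\<^sup>*) = card W + 1\<close> by simp
qed

lemma card_quotient_Id: "card (V // Id) = card V"
proof -
  have "V // Id = (\<lambda>z. {z}) ` V" unfolding quotient_eq_image by simp
  then show ?thesis by (simp add: card_image)
qed

lemma card_quotient_rtrancl_connected:
  assumes "R \<subseteq> V \<times> V" "V \<noteq> {}" "\<And>u v. u \<in> V \<Longrightarrow> v \<in> V \<Longrightarrow> (u, v) \<in> R\<^sup>*"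
  shows "card (V // R\<^sup>*) = 1"
proof -
  have "R\<^sup>* `` {z} = V" if "z \<in> V" for z
    using rtrancl_Image_subset[OF assms(1) that] assms(3)[OF that] by blast
  then have "V // R\<^sup>* = {V}" unfolding quotient_eq_image using assms(2) by auto
  then show ?thesis by simp
qed

lemma const_on_clusters_quotient_iff:
  assumes "R \<subseteq> V \<times> V"
  shows "const_on_clusters s (V // R\<^sup>*) \<longleftrightarrow> (\<forall>(u, v) \<in> R. s u = s v)"
proof
  assume const: "const_on_clusters s (V // R\<^sup>*)"
  show "\<forall>(u, v) \<in> R. s u = s v"
  proof clarify
    fix u v assume "(u, v) \<in> R"
    then have "R\<^sup>* `` {u} \<in> V // R\<^sup>*" "u \<in> R\<^sup>* `` {u}" "v \<in> R\<^sup>* `` {u}"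
      using assms by (auto intro!: quotientI)
    then show "s u = s v" using const unfolding const_on_clusters_def by blast
  qed
next
  assume edges: "\<forall>(u, v) \<in> R. s u = s v"
  have rtrancl_const: "s u = s v" if "(u, v) \<in> R\<^sup>*" for u v
    using that by (induction rule: rtrancl_induct) (use edges in auto)
  show "const_on_clusters s (V // R\<^sup>*)"
    unfolding const_on_clusters_def quotient_eq_image
  proof (intro ballI)
    fix C u v assume "C \<in> (\<lambda>z. R\<^sup>* `` {z}) ` V" "u \<in> C" "v \<in> C"
    then obtain z where "(z, u) \<in> R\<^sup>*" "(z, v) \<in> R\<^sup>*" by blast
    then show "s u = s v" using rtrancl_const by metis
  qed
qed

lemma card_PiE_const_on_quotient:
  fixes V :: "'a set set"
  assumes "finite V" "R \<subseteq> V \<times> V" "sym R"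
  shows "card {\<sigma> \<in> V \<rightarrow>\<^sub>E Q. const_on_clusters \<sigma> (V // R\<^sup>*)} = card Q ^ card (V // R\<^sup>*)"
proof -
  let ?C = "V // R\<^sup>*" and ?cls = "\<lambda>z. R\<^sup>* `` {z}"
  define rep where "rep c = (SOME v. v \<in> c)" for c :: "'a set set"
  have rep: "rep c \<in> V" "?cls (rep c) = c" "rep c \<in> c" if "c \<in> ?C" for c
  proof -
    obtain z where z: "z \<in> V" "c = ?cls z" using \<open>c \<in> ?C\<close> unfolding quotient_eq_image by blast
    then have "z \<in> c" by simp
    then show "rep c \<in> c" unfolding rep_def by (rule someI)
    then show "?cls (rep c) = c" "rep c \<in> V"
      using z sym_rtrancl_Image_eq[OF assms(3)] rtrancl_Image_subset[OF assms(2)] by blast+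
  qed
  have class_in: "?cls v \<in> ?C" if "v \<in> V" for v
    using that by (rule quotientI)
  have "bij_betw (\<lambda>g. \<lambda>v\<in>V. g (?cls v)) (?C \<rightarrow>\<^sub>E Q)
      {\<sigma> \<in> V \<rightarrow>\<^sub>E Q. const_on_clusters \<sigma> ?C}"
  proof (rule bij_betw_byWitness[where f' = "\<lambda>\<sigma>. \<lambda>c\<in>?C. \<sigma> (rep c)"])
    show "\<forall>g \<in> ?C \<rightarrow>\<^sub>E Q. (\<lambda>c\<in>?C. (\<lambda>v\<in>V. g (?cls v)) (rep c)) = g"
      using rep by (auto simp: PiE_def extensional_def restrict_def fun_eq_iff)
    show "\<forall>\<sigma> \<in> {\<sigma> \<in> V \<rightarrow>\<^sub>E Q. const_on_clusters \<sigma> ?C}.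
        (\<lambda>v\<in>V. (\<lambda>c\<in>?C. \<sigma> (rep c)) (?cls v)) = \<sigma>"
    proof clarify
      fix \<sigma> assume \<sigma>: "\<sigma> \<in> V \<rightarrow>\<^sub>E Q" "const_on_clusters \<sigma> ?C"
      have "\<sigma> (rep (?cls v)) = \<sigma> v" if "v \<in> V" for v
        using \<sigma>(2) rep(3)[OF class_in[OF that]] class_in[OF that]
        unfolding const_on_clusters_def by blast
      then show "(\<lambda>v\<in>V. (\<lambda>c\<in>?C. \<sigma> (rep c)) (?cls v)) = \<sigma>"
        using \<sigma>(1) class_in by (auto simp: PiE_def extensional_def restrict_def fun_eq_iff)
    qed
    show "(\<lambda>g. \<lambda>v\<in>V. g (?cls v)) ` (?C \<rightarrow>\<^sub>E Q) \<subseteq> {\<sigma> \<in> V \<rightarrow>\<^sub>E Q. const_on_clusters \<sigma> ?C}"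
    proof clarify
      fix g assume "g \<in> ?C \<rightarrow>\<^sub>E Q"
      moreover have "?cls u = c" if "c \<in> ?C" "u \<in> c" for c u
        using that sym_rtrancl_Image_eq[OF assms(3)] unfolding quotient_eq_image by blast
      moreover have "u \<in> V" if "c \<in> ?C" "u \<in> c" for c u
        using that rtrancl_Image_subset[OF assms(2)] unfolding quotient_eq_image by blast
      ultimately show "(\<lambda>v\<in>V. g (?cls v)) \<in> V \<rightarrow>\<^sub>E Q \<and> const_on_clusters (\<lambda>v\<in>V. g (?cls v)) ?C"
        using class_in unfolding const_on_clusters_def by auto
    qed
    show "(\<lambda>\<sigma>. \<lambda>c\<in>?C. \<sigma> (rep c)) ` {\<sigma> \<in> V \<rightarrow>\<^sub>E Q. const_on_clusters \<sigma> ?C} \<subseteq> ?C \<rightarrow>\<^sub>E Q"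
      using rep(1) by auto
  qed
  then have "card {\<sigma> \<in> V \<rightarrow>\<^sub>E Q. const_on_clusters \<sigma> ?C} = card (?C \<rightarrow>\<^sub>E Q)"
    by (simp add: bij_betw_same_card)
  also have "\<dots> = card Q ^ card ?C"
    using assms(1) by (simp add: card_PiE quotient_eq_image)
  finally show ?thesis .
qed

lemma inj_on_image_Diff_eq:
  assumes "finite A" "finite A'" "card A' = card A"
    and "inj_on g (A' - A)" "g ` (A' - A) \<subseteq> A - A'"
  shows "g ` (A' - A) = A - A'"
proof (rule card_subset_eq)
  show "finite (A - A')" using assms(1) by simp
  have "card (A' - A) = card (A - A')"
    using assms(1-3) by (simp add: card_Diff_subset_Int Int_commute)
  then show "card (g ` (A' - A)) = card (A - A')"
    using card_image[OF assms(4)] by simp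
qed (fact assms(5))

lemma sum_Pow_between_binomial:
  fixes a b :: "'a :: comm_semiring_1"
  assumes "finite E" "A \<subseteq> E" "B \<subseteq> E" "a + b = 1"
  shows "(\<Sum>\<omega>\<in>Pow E. if A \<subseteq> \<omega> \<and> \<omega> \<inter> B = {} then a ^ card \<omega> * b ^ card (E - \<omega>) else 0)
       = (if A \<inter> B = {} then a ^ card A * b ^ card B else 0)"
proof -
  define f where "f x = (if x \<in> B then 0 else a)" for x
  define g where "g x = (if x \<in> A then 0 else b)" for x
  have fin: "finite X" if "X \<subseteq> E" for X
    using that assms(1) by (rule finite_subset)
  have prod_f: "prod f \<omega> = (if \<omega> \<inter> B = {} then a ^ card \<omega> else 0)" if "\<omega> \<subseteq> E" for \<omega>
  proof (cases "\<omega> \<inter> B = {}")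
    case True
    then show ?thesis unfolding f_def by (simp add: disjoint_iff)
  next
    case False
    then show ?thesis unfolding f_def by (auto intro!: prod_zero fin[OF that])
  qed
  have prod_g: "prod g (E - \<omega>) = (if A \<subseteq> \<omega> then b ^ card (E - \<omega>) else 0)" for \<omega>
  proof (cases "A \<subseteq> \<omega>")
    case True
    then have "prod g (E - \<omega>) = (\<Prod>x\<in>E - \<omega>. b)"
      unfolding g_def by (intro prod.cong) auto
    then show ?thesis using True by simp
  next
    case False
    then show ?thesis unfolding g_def using assms(1,2) by (auto intro!: prod_zero)
  qed
  have "(\<Sum>\<omega>\<in>Pow E. if A \<subseteq> \<omega> \<and> \<omega> \<inter> B = {} then a ^ card \<omega> * b ^ card (E - \<omega>) else 0)
      = (\<Sum>\<omega>\<in>Pow E. prod f \<omega> * prod g (E - \<omega>))"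
    by (intro sum.cong) (auto simp: prod_f prod_g)
  also have "\<dots> = (\<Prod>x\<in>E. f x + g x)"
    by (rule prod_add[OF assms(1), symmetric])
  also have "\<dots> = (if A \<inter> B = {} then a ^ card A * b ^ card B else 0)"
  proof (cases "A \<inter> B = {}")
    case True
    then have "(\<Prod>x\<in>E. f x + g x) = (\<Prod>x\<in>E. if x \<in> A then a else if x \<in> B then b else 1)"
      using assms(4) unfolding f_def g_def by (intro prod.cong) auto
    also have "\<dots> = a ^ card A * b ^ card B"
    proof -
      have "(E - A) \<inter> B = B" using True assms(3) by blast
      then show ?thesis
        using assms(1-3) by (simp add: prod.If_cases Int_absorb1 Diff_eq[symmetric] Int_Diff)
    qed
    finally show ?thesis using True by simp
  next
    case False
    then show ?thesis unfolding f_def g_def using assms(1,2) by (auto intro!: prod_zero)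
  qed
  finally show ?thesis .
qed

lemma sum_sum_if_conj:
  assumes "finite A" "finite B"
  shows "(\<Sum>x\<in>A. \<Sum>y\<in>B. if P x \<and> R y then c else 0) =
    (c :: 'a :: comm_semiring_1) * of_nat (card {x \<in> A. P x}) * of_nat (card {y \<in> B. R y})"
proof -
  have "(\<Sum>x\<in>A. \<Sum>y\<in>B. if P x \<and> R y then c else 0) =
      (\<Sum>x\<in>A. \<Sum>y\<in>B. (c * of_bool (P x)) * of_bool (R y))"
    by (intro sum.cong) auto
  also have "\<dots> = (\<Sum>x\<in>A. c * of_bool (P x)) * (\<Sum>y\<in>B. of_bool (R y))"
    by (rule sum_product[symmetric])
  also have "\<dots> = c * (\<Sum>x\<in>A. of_bool (P x)) * (\<Sum>y\<in>B. of_bool (R y))"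
    by (simp add: sum_distrib_left)
  also have "\<dots> = c * of_nat (card {x \<in> A. P x}) * of_nat (card {y \<in> B. R y})"
    using assms by (simp add: Int_def)
  finally show ?thesis .
qed

section \<open>Combinatorial maps\<close>

locale combinatorial_map =
  fixes D :: "'d set" and alpha rho :: "'d \<Rightarrow> 'd"
  assumes comb_map: "comb_map D alpha rho"
begin

lemma finite_darts: "finite D"
  and darts_nonempty: "D \<noteq> {}"
  and bij_alpha: "bij_betw alpha D D"
  and bij_rho: "bij_betw rho D D"
  and alpha_alpha: "x \<in> D \<Longrightarrow> alpha (alpha x) = x"
  and darts_connected: "x \<in> D \<Longrightarrow> y \<in> D \<Longrightarrow>
    (x, y) \<in> ({(z, alpha z) | z. z \<in> D} \<union> {(z, rho z) | z. z \<in> D})\<^sup>*"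
  using comb_map unfolding comb_map_def by blast+

lemma alpha_in: "x \<in> D \<Longrightarrow> alpha x \<in> D"
  using bij_alpha by (rule bij_betw_apply)

lemma rho_in: "x \<in> D \<Longrightarrow> rho x \<in> D"
  using bij_rho by (rule bij_betw_apply)

lemma orb_rho_apply: "x \<in> D \<Longrightarrow> orb rho (rho x) = orb rho x"
  using finite_darts bij_rho by (rule orb_eq_if_mem) (use apply_in_orb in auto)

lemma face_of_rho: "x \<in> D \<Longrightarrow> face_of alpha rho (rho x) = face_of alpha rho (alpha x)"
proof -
  assume "x \<in> D"
  then have "rho x = (rho \<circ> alpha) (alpha x)" by (simp add: alpha_alpha)
  then have "rho x \<in> orb (rho \<circ> alpha) (alpha x)" using apply_in_orb[of "rho \<circ> alpha"] by simp
  then show ?thesis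
    unfolding face_of_def
    using finite_darts bij_betw_trans[OF bij_alpha bij_rho] alpha_in[OF \<open>x \<in> D\<close>]
    by (rule orb_eq_if_mem[rotated 3])
qed

lemma edge_eq_iff: "x \<in> D \<Longrightarrow> d \<in> D \<Longrightarrow> {x, alpha x} = {d, alpha d} \<longleftrightarrow> x = d \<or> x = alpha d"
  using alpha_alpha by (auto simp: doubleton_eq_iff)

lemma finite_map_verts: "finite (map_verts D rho)"
  unfolding map_verts_def using finite_darts by simp

lemma finite_map_faces: "finite (map_faces D alpha rho)"
  unfolding map_faces_def using finite_darts by simp

lemma finite_map_edges: "finite (map_edges D alpha)"
  unfolding map_edges_def using finite_darts by simp

lemma primal_rel_subset: "primal_rel D alpha rho \<omega> \<subseteq> map_verts D rho \<times> map_verts D rho"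
  unfolding primal_rel_def map_verts_def using alpha_in by auto

lemma dual_rel_subset: "dual_rel D alpha rho \<omega> \<subseteq> map_faces D alpha rho \<times> map_faces D alpha rho"
  unfolding dual_rel_def map_faces_def using alpha_in by auto

lemma sym_primal_rel: "sym (primal_rel D alpha rho \<omega>)"
proof (rule symI)
  fix u v assume "(u, v) \<in> primal_rel D alpha rho \<omega>"
  then obtain d where "d \<in> D" "{d, alpha d} \<in> \<omega>" "u = orb rho d" "v = orb rho (alpha d)"
    unfolding primal_rel_def by blast
  then have "alpha d \<in> D \<and> {alpha d, alpha (alpha d)} \<in> \<omega> \<and>
      v = orb rho (alpha d) \<and> u = orb rho (alpha (alpha d))"
    using alpha_in alpha_alpha by (simp add: insert_commute)
  then show "(v, u) \<in> primal_rel D alpha rho \<omega>" unfolding primal_rel_def by blast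
qed

lemma sym_dual_rel: "sym (dual_rel D alpha rho \<omega>)"
proof (rule symI)
  fix u v assume "(u, v) \<in> dual_rel D alpha rho \<omega>"
  then obtain d where "d \<in> D" "{d, alpha d} \<notin> \<omega>"
      "u = face_of alpha rho d" "v = face_of alpha rho (alpha d)"
    unfolding dual_rel_def by blast
  then have "alpha d \<in> D \<and> {alpha d, alpha (alpha d)} \<notin> \<omega> \<and>
      v = face_of alpha rho (alpha d) \<and> u = face_of alpha rho (alpha (alpha d))"
    using alpha_in alpha_alpha by (simp add: insert_commute)
  then show "(v, u) \<in> dual_rel D alpha rho \<omega>" unfolding dual_rel_def by blast
qed

lemma primal_rel_insert:
  assumes "d \<in> D"
  shows "primal_rel D alpha rho (insert {d, alpha d} \<omega>) = primal_rel D alpha rho \<omega> \<union>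
    {(orb rho d, orb rho (alpha d)), (orb rho (alpha d), orb rho d)}"
  unfolding primal_rel_def
  using assms alpha_in[OF assms] alpha_alpha[OF assms] edge_eq_iff[OF _ assms] by auto

lemma dual_rel_insert:
  assumes "d \<in> D" "{d, alpha d} \<notin> \<omega>"
  shows "dual_rel D alpha rho \<omega> = dual_rel D alpha rho (insert {d, alpha d} \<omega>) \<union>
    {(face_of alpha rho d, face_of alpha rho (alpha d)), (face_of alpha rho (alpha d), face_of alpha rho d)}"
proof -
  let ?f = "face_of alpha rho"
  have "dual_rel D alpha rho \<omega> = {(?f x, ?f (alpha x)) | x. x \<in> D \<and> {x, alpha x} = {d, alpha d}}
      \<union> dual_rel D alpha rho (insert {d, alpha d} \<omega>)"
    unfolding dual_rel_def using assms(2) by auto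
  also have "{(?f x, ?f (alpha x)) | x. x \<in> D \<and> {x, alpha x} = {d, alpha d}} =
      {(?f d, ?f (alpha d)), (?f (alpha d), ?f d)}"
    using assms(1) alpha_in[OF assms(1)] alpha_alpha[OF assms(1)] edge_eq_iff[OF _ assms(1)] by auto
  finally show ?thesis by blast
qed

lemma image_darts_connected:
  assumes "\<And>z. z \<in> D \<Longrightarrow> (f z, f (alpha z)) \<in> R\<^sup>*"
    and "\<And>z. z \<in> D \<Longrightarrow> (f z, f (rho z)) \<in> R\<^sup>*"
    and "x \<in> D" "y \<in> D"
  shows "(f x, f y) \<in> R\<^sup>*"
  using darts_connected[OF assms(3,4)]
proof (induction rule: rtrancl_induct)
  case base
  then show ?case by simp
next
  case (step y z)
  then have "(f y, f z) \<in> R\<^sup>*" using assms(1,2) by blast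
  with step.IH show ?case by (rule rtrancl_trans)
qed

lemma card_clusters_empty: "card (clusters D alpha rho {}) = card (map_verts D rho)"
proof -
  have "primal_rel D alpha rho {} = {}" unfolding primal_rel_def by simp
  then show ?thesis unfolding clusters_def by (simp add: card_quotient_Id)
qed

lemma card_dual_clusters_edges:
  "card (dual_clusters D alpha rho (map_edges D alpha)) = card (map_faces D alpha rho)"
proof -
  have "dual_rel D alpha rho (map_edges D alpha) = {}" unfolding dual_rel_def map_edges_def by auto
  then show ?thesis unfolding dual_clusters_def by (simp add: card_quotient_Id)
qed

lemma card_clusters_edges: "card (clusters D alpha rho (map_edges D alpha)) = 1"
  unfolding clusters_def
proof (rule card_quotient_rtrancl_connected[OF primal_rel_subset])
  show "map_verts D rho \<noteq> {}" unfolding map_verts_def using darts_nonempty by simp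
  let ?R = "primal_rel D alpha rho (map_edges D alpha)"
  have "(orb rho z, orb rho (alpha z)) \<in> ?R" if "z \<in> D" for z
    using that unfolding primal_rel_def map_edges_def by blast
  then show "(u, v) \<in> ?R\<^sup>*" if "u \<in> map_verts D rho" "v \<in> map_verts D rho" for u v
    using that image_darts_connected[of "orb rho" ?R] orb_rho_apply
    unfolding map_verts_def by force
qed

lemma card_dual_clusters_empty: "card (dual_clusters D alpha rho {}) = 1"
  unfolding dual_clusters_def
proof (rule card_quotient_rtrancl_connected[OF dual_rel_subset])
  show "map_faces D alpha rho \<noteq> {}" unfolding map_faces_def using darts_nonempty by simp
  let ?R = "dual_rel D alpha rho {}"
  have "(face_of alpha rho z, face_of alpha rho (alpha z)) \<in> ?R" if "z \<in> D" for z
    using that unfolding dual_rel_def by blast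
  then show "(u, v) \<in> ?R\<^sup>*" if "u \<in> map_faces D alpha rho" "v \<in> map_faces D alpha rho" for u v
    using that image_darts_connected[of "face_of alpha rho" ?R] face_of_rho
    unfolding map_faces_def by force
qed

subsection \<open>Euler's relation\<close>

lemma rho_image_vertex_preimage: "rho ` {x \<in> D. orb rho x \<in> C} = {x \<in> D. orb rho x \<in> C}"
proof
  show "rho ` {x \<in> D. orb rho x \<in> C} \<subseteq> {x \<in> D. orb rho x \<in> C}"
    using rho_in orb_rho_apply by auto
  show "{x \<in> D. orb rho x \<in> C} \<subseteq> rho ` {x \<in> D. orb rho x \<in> C}"
  proof
    fix y assume y: "y \<in> {x \<in> D. orb rho x \<in> C}"
    then obtain x where "x \<in> D" "y = rho x"
      using bij_rho by (auto simp: bij_betw_def)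
    with y show "y \<in> rho ` {x \<in> D. orb rho x \<in> C}"
      using orb_rho_apply by auto
  qed
qed

lemma card_darts_face_alpha_eq:
  assumes "X \<subseteq> D" "rho ` X = X"
  shows "card {x \<in> X. face_of alpha rho (alpha x) \<in> S} = card {x \<in> X. face_of alpha rho x \<in> S}"
proof -
  let ?A = "{x \<in> X. face_of alpha rho x \<in> S}" and ?A' = "{x \<in> X. face_of alpha rho (alpha x) \<in> S}"
  have "rho ` ?A' = ?A"
  proof
    show "rho ` ?A' \<subseteq> ?A"
      using assms face_of_rho by auto
    show "?A \<subseteq> rho ` ?A'"
    proof
      fix y assume "y \<in> ?A"
      then obtain x where "x \<in> X" "y = rho x" using assms(2) by auto
      with \<open>y \<in> ?A\<close> show "y \<in> rho ` ?A'" using assms(1) face_of_rho by auto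
    qed
  qed
  moreover have "inj_on rho ?A'"
    using bij_betw_imp_inj_on[OF bij_rho] by (rule inj_on_subset) (use assms(1) in blast)
  then have "card (rho ` ?A') = card ?A'" by (rule card_image)
  ultimately show ?thesis by simp
qed

text \<open>Suppose neither holds; let X be the darts at the omega-cluster of d and S the dual cluster
  of the face of d.  Since rho permutes X and carries the face of alpha x to that of rho x, the
  sets A and A' below have equal size; but alpha maps A' - A injectively into A - A' and misses d.\<close>
lemma endpoints_connected_or_faces_connected:
  assumes "d \<in> D"
  shows "(orb rho d, orb rho (alpha d)) \<in> (primal_rel D alpha rho \<omega>)\<^sup>* \<or>
    (face_of alpha rho d, face_of alpha rho (alpha d)) \<in> (dual_rel D alpha rho (insert {d, alpha d} \<omega>))\<^sup>*"
proof (rule ccontr)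
  let ?f = "face_of alpha rho" and ?e = "{d, alpha d}"
  define C where "C = (primal_rel D alpha rho \<omega>)\<^sup>* `` {orb rho d}"
  define S where "S = (dual_rel D alpha rho (insert ?e \<omega>))\<^sup>* `` {?f d}"
  define X where "X = {x \<in> D. orb rho x \<in> C}"
  define A where "A = {x \<in> X. ?f x \<in> S}"
  define A' where "A' = {x \<in> X. ?f (alpha x) \<in> S}"
  assume "\<not> ?thesis"
  then have "alpha d \<notin> X" "?f (alpha d) \<notin> S"
    unfolding X_def C_def S_def by auto
  moreover have "d \<in> X" "?f d \<in> S"
    using assms unfolding X_def C_def S_def by auto
  ultimately have d: "d \<in> A - A'"
    unfolding A_def A'_def by simp
  have "X \<subseteq> D" unfolding X_def by blast
  have fin: "finite A" "finite A'"
    using finite_darts unfolding A_def A'_def X_def by auto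
  have "card A' = card A"
    unfolding A_def A'_def using \<open>X \<subseteq> D\<close> rho_image_vertex_preimage
    by (intro card_darts_face_alpha_eq) (simp_all add: X_def)
  have "alpha ` (A' - A) \<subseteq> (A - A') - {d}"
  proof
    fix y assume "y \<in> alpha ` (A' - A)"
    then obtain x where x: "x \<in> A' - A" "y = alpha x" by blast
    then have "x \<in> X" "x \<in> D" "?f (alpha x) \<in> S" "?f x \<notin> S"
      using \<open>X \<subseteq> D\<close> unfolding A_def A'_def by auto
    have "x \<noteq> d" "x \<noteq> alpha d"
      using x d \<open>x \<in> X\<close> \<open>alpha d \<notin> X\<close> by auto
    have "{x, alpha x} \<in> \<omega>"
    proof (rule ccontr)
      assume "{x, alpha x} \<notin> \<omega>"
      moreover have "{x, alpha x} \<noteq> ?e"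
        using edge_eq_iff[OF \<open>x \<in> D\<close> assms] \<open>x \<noteq> d\<close> \<open>x \<noteq> alpha d\<close> by simp
      ultimately have "(?f x, ?f (alpha x)) \<in> dual_rel D alpha rho (insert ?e \<omega>)"
        using \<open>x \<in> D\<close> unfolding dual_rel_def by blast
      then have "(?f (alpha x), ?f x) \<in> dual_rel D alpha rho (insert ?e \<omega>)"
        using sym_dual_rel by (rule symD[rotated])
      with \<open>?f (alpha x) \<in> S\<close> have "?f x \<in> S"
        unfolding S_def by (simp add: rtrancl_into_rtrancl)
      with \<open>?f x \<notin> S\<close> show False by contradiction
    qed
    then have "(orb rho x, orb rho (alpha x)) \<in> primal_rel D alpha rho \<omega>"
      using \<open>x \<in> D\<close> unfolding primal_rel_def by blast
    with \<open>x \<in> X\<close> have "alpha x \<in> X"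
      unfolding X_def C_def using alpha_in[OF \<open>x \<in> D\<close>] by (auto intro: rtrancl_into_rtrancl)
    moreover have "alpha x \<noteq> d"
      using \<open>x \<noteq> alpha d\<close> alpha_alpha[OF \<open>x \<in> D\<close>] by auto
    ultimately show "y \<in> (A - A') - {d}"
      using x \<open>?f (alpha x) \<in> S\<close> \<open>?f x \<notin> S\<close> alpha_alpha[OF \<open>x \<in> D\<close>]
      unfolding A_def A'_def by simp
  qed
  moreover have "inj_on alpha (A' - A)"
    using bij_betw_imp_inj_on[OF bij_alpha] by (rule inj_on_subset) (use \<open>X \<subseteq> D\<close> in \<open>auto simp: A'_def\<close>)
  ultimately have "alpha ` (A' - A) = A - A'"
    using fin \<open>card A' = card A\<close> by (intro inj_on_image_Diff_eq) auto
  with d \<open>alpha ` (A' - A) \<subseteq> (A - A') - {d}\<close> show False by blast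
qed

definition euler_defect :: "'d set set \<Rightarrow> int" where
  "euler_defect \<omega> = int (card (dual_clusters D alpha rho \<omega>)) - int (card (clusters D alpha rho \<omega>))
     - int (card \<omega>)"

lemma euler_defect_insert_le:
  assumes "\<omega> \<subseteq> map_edges D alpha" "e \<in> map_edges D alpha"
  shows "euler_defect (insert e \<omega>) \<le> euler_defect \<omega>"
proof (cases "e \<in> \<omega>")
  case True
  then show ?thesis by (simp add: insert_absorb)
next
  case False
  obtain d where d: "d \<in> D" "e = {d, alpha d}"
    using assms(2) unfolding map_edges_def by blast
  let ?V = "map_verts D rho" and ?U = "map_faces D alpha rho"
  let ?u = "orb rho d" and ?v = "orb rho (alpha d)"
  let ?g = "face_of alpha rho d" and ?h = "face_of alpha rho (alpha d)"
  define Rp where "Rp = primal_rel D alpha rho \<omega>"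
  define Rd where "Rd = dual_rel D alpha rho (insert e \<omega>)"
  have verts: "?u \<in> ?V" "?v \<in> ?V" and faces: "?g \<in> ?U" "?h \<in> ?U"
    unfolding map_verts_def map_faces_def using d(1) alpha_in[OF d(1)] by auto
  have clusters: "clusters D alpha rho (insert e \<omega>) = ?V // (Rp \<union> {(?u, ?v), (?v, ?u)})\<^sup>*"
    unfolding clusters_def Rp_def d(2) primal_rel_insert[OF d(1)] ..
  have dual_clusters: "dual_clusters D alpha rho \<omega> = ?U // (Rd \<union> {(?g, ?h), (?h, ?g)})\<^sup>*"
    unfolding dual_clusters_def Rd_def d(2) dual_rel_insert[OF d(1) False[unfolded d(2)]] ..
  have "card (insert e \<omega>) = card \<omega> + 1"
    using False finite_subset[OF assms(1) finite_map_edges] by simp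
  moreover consider "(?u, ?v) \<in> Rp\<^sup>*" | "(?g, ?h) \<in> Rd\<^sup>*"
    using endpoints_connected_or_faces_connected[OF d(1), of \<omega>] unfolding Rp_def Rd_def d(2) by blast
  then have "int (card (dual_clusters D alpha rho (insert e \<omega>))) - int (card (clusters D alpha rho (insert e \<omega>)))
      \<le> int (card (dual_clusters D alpha rho \<omega>)) - int (card (clusters D alpha rho \<omega>)) + 1"
  proof cases
    case 1
    then have "clusters D alpha rho (insert e \<omega>) = clusters D alpha rho \<omega>"
      using rtrancl_insert_pair_absorb[OF sym_primal_rel] unfolding clusters Rp_def
      by (simp add: clusters_def)
    moreover have "card (?U // Rd\<^sup>*) \<le> card (?U // (Rd \<union> {(?g, ?h), (?h, ?g)})\<^sup>*) + 1"
      using finite_map_faces dual_rel_subset sym_dual_rel faces unfolding Rd_def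
      by (rule card_quotient_rtrancl_le_insert_pair)
    ultimately show ?thesis
      unfolding dual_clusters by (simp add: dual_clusters_def Rd_def)
  next
    case 2
    then have "dual_clusters D alpha rho \<omega> = dual_clusters D alpha rho (insert e \<omega>)"
      using rtrancl_insert_pair_absorb[OF sym_dual_rel] unfolding dual_clusters Rd_def
      by (simp add: dual_clusters_def)
    moreover have "card (?V // Rp\<^sup>*) \<le> card (?V // (Rp \<union> {(?u, ?v), (?v, ?u)})\<^sup>*) + 1"
      using finite_map_verts primal_rel_subset sym_primal_rel verts unfolding Rp_def
      by (rule card_quotient_rtrancl_le_insert_pair)
    ultimately show ?thesis
      unfolding clusters by (simp add: clusters_def Rp_def)
  qed
  ultimately show ?thesis unfolding euler_defect_def by linarith
qed

lemma euler_defect_antimono: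
  assumes "\<omega> \<subseteq> \<omega>'" "\<omega>' \<subseteq> map_edges D alpha"
  shows "euler_defect \<omega>' \<le> euler_defect \<omega>"
proof -
  have "euler_defect (\<omega> \<union> F) \<le> euler_defect \<omega>" if "finite F" "F \<subseteq> map_edges D alpha" for F
    using that
  proof (induction F rule: finite_induct)
    case empty
    then show ?case by simp
  next
    case (insert e F)
    have "euler_defect (\<omega> \<union> insert e F) = euler_defect (insert e (\<omega> \<union> F))" by simp
    also have "\<dots> \<le> euler_defect (\<omega> \<union> F)"
      using assms insert.prems by (intro euler_defect_insert_le) auto
    also have "\<dots> \<le> euler_defect \<omega>"
      using insert by simp
    finally show ?case .
  qed
  moreover have "finite (\<omega>' - \<omega>)" "\<omega>' - \<omega> \<subseteq> map_edges D alpha"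
    using assms(2) finite_subset[OF _ finite_map_edges] by auto
  moreover have "\<omega> \<union> (\<omega>' - \<omega>) = \<omega>'"
    using assms(1) by blast
  ultimately show ?thesis by metis
qed

lemma euler_defect_empty: "euler_defect {} = 1 - int (card (map_verts D rho))"
  unfolding euler_defect_def card_clusters_empty card_dual_clusters_empty by simp

text \<open>The only use of genus zero: on a surface of genus g the defect of E is 1 - |V| - 2g.\<close>
lemma euler_defect_edges:
  assumes "genus_zero D alpha rho"
  shows "euler_defect (map_edges D alpha) = 1 - int (card (map_verts D rho))"
  using assms unfolding euler_defect_def genus_zero_def card_clusters_edges card_dual_clusters_edges
  by simp

lemma euler_relation:
  assumes "genus_zero D alpha rho" "\<omega> \<subseteq> map_edges D alpha"
  shows "card (dual_clusters D alpha rho \<omega>) + card (map_verts D rho) = card (clusters D alpha rho \<omega>) + card \<omega> + 1"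
proof -
  have "euler_defect (map_edges D alpha) \<le> euler_defect \<omega>" "euler_defect \<omega> \<le> euler_defect {}"
    using assms(2) by (auto intro: euler_defect_antimono)
  then have "euler_defect \<omega> = 1 - int (card (map_verts D rho))"
    using euler_defect_empty euler_defect_edges[OF assms(1)] by simp
  then show ?thesis unfolding euler_defect_def by simp
qed

lemma eta_primal_subset: "eta_primal D alpha rho \<sigma> \<subseteq> map_edges D alpha"
  unfolding eta_primal_def map_edges_def by blast

lemma eta_dual_subset: "eta_dual D alpha rho \<sigma> \<subseteq> map_edges D alpha"
  unfolding eta_dual_def map_edges_def by blast

lemma const_on_clusters_iff:
  "const_on_clusters \<sigma> (clusters D alpha rho \<omega>) \<longleftrightarrow> \<omega> \<inter> eta_primal D alpha rho \<sigma> = {}"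
  unfolding clusters_def const_on_clusters_quotient_iff[OF primal_rel_subset]
  unfolding primal_rel_def eta_primal_def by blast

lemma const_on_dual_clusters_iff:
  "const_on_clusters \<sigma> (dual_clusters D alpha rho \<omega>) \<longleftrightarrow> eta_dual D alpha rho \<sigma> \<subseteq> \<omega>"
  unfolding dual_clusters_def const_on_clusters_quotient_iff[OF dual_rel_subset]
  unfolding dual_rel_def eta_dual_def by blast

lemma card_spins_const_on_clusters:
  "card {\<sigma> \<in> map_verts D rho \<rightarrow>\<^sub>E Q. \<omega> \<inter> eta_primal D alpha rho \<sigma> = {}} =
    card Q ^ card (clusters D alpha rho \<omega>)"
  using card_PiE_const_on_quotient[OF finite_map_verts primal_rel_subset sym_primal_rel]
  unfolding const_on_clusters_iff[symmetric] clusters_def .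

lemma card_spins_const_on_dual_clusters:
  "card {\<sigma> \<in> map_faces D alpha rho \<rightarrow>\<^sub>E Q. eta_dual D alpha rho \<sigma> \<subseteq> \<omega>} =
    card Q ^ card (dual_clusters D alpha rho \<omega>)"
  using card_PiE_const_on_quotient[OF finite_map_faces dual_rel_subset sym_dual_rel]
  unfolding const_on_dual_clusters_iff[symmetric] dual_clusters_def .

definition coupling_weight :: "nat \<Rightarrow> nat \<Rightarrow> real \<Rightarrow> real \<Rightarrow> 'd set set \<Rightarrow> real" where
  "coupling_weight q q' a b \<omega> = real q ^ card (clusters D alpha rho \<omega>)
     * real q' ^ card (dual_clusters D alpha rho \<omega>) * a ^ card \<omega> * b ^ card (map_edges D alpha - \<omega>)"

lemma sum_Sigma_eq_sum_coupling_weight: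
  fixes a b :: real
  assumes "a + b = 1" "finite Q" "finite Q'"
  shows "(\<Sum>(\<tau>, \<tau>') \<in> {(\<tau>, \<tau>'). \<tau> \<in> map_verts D rho \<rightarrow>\<^sub>E Q \<and>
             \<tau>' \<in> map_faces D alpha rho \<rightarrow>\<^sub>E Q' \<and> in_Sigma D alpha rho \<tau> \<tau>'}.
           a ^ card (eta_dual D alpha rho \<tau>') * b ^ card (eta_primal D alpha rho \<tau>))
       = (\<Sum>\<omega>\<in>Pow (map_edges D alpha). coupling_weight (card Q) (card Q') a b \<omega>)"
    (is "?lhs = _")
proof -
  let ?E = "map_edges D alpha" and ?VQ = "map_verts D rho \<rightarrow>\<^sub>E Q" and ?UQ = "map_faces D alpha rho \<rightarrow>\<^sub>E Q'"
  let ?A = "eta_dual D alpha rho" and ?B = "eta_primal D alpha rho"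
  let ?w = "\<lambda>\<omega>. a ^ card \<omega> * b ^ card (?E - \<omega>)"
  have fin: "finite ?VQ" "finite ?UQ"
    using assms(2,3) finite_map_verts finite_map_faces by (simp_all add: finite_PiE)
  have "{(\<tau>, \<tau>'). \<tau> \<in> ?VQ \<and> \<tau>' \<in> ?UQ \<and> in_Sigma D alpha rho \<tau> \<tau>'} =
      {x \<in> ?VQ \<times> ?UQ. in_Sigma D alpha rho (fst x) (snd x)}"
    by auto
  then have "?lhs = (\<Sum>\<tau>\<in>?VQ. \<Sum>\<tau>'\<in>?UQ.
      if in_Sigma D alpha rho \<tau> \<tau>' then a ^ card (?A \<tau>') * b ^ card (?B \<tau>) else 0)"
    using fin by (simp add: sum.inter_filter sum.cartesian_product split_beta)
  also have "\<dots> = (\<Sum>\<tau>\<in>?VQ. \<Sum>\<tau>'\<in>?UQ. \<Sum>\<omega>\<in>Pow ?E. if ?A \<tau>' \<subseteq> \<omega> \<and> \<omega> \<inter> ?B \<tau> = {} then ?w \<omega> else 0)"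
    using sum_Pow_between_binomial[OF finite_map_edges eta_dual_subset eta_primal_subset assms(1)]
    unfolding in_Sigma_def by (simp add: Int_commute)
  also have "\<dots> = (\<Sum>\<omega>\<in>Pow ?E. \<Sum>\<tau>\<in>?VQ. \<Sum>\<tau>'\<in>?UQ. if \<omega> \<inter> ?B \<tau> = {} \<and> ?A \<tau>' \<subseteq> \<omega> then ?w \<omega> else 0)"
    by (subst sum.swap) (simp add: sum.swap[of _ ?UQ] conj_commute)
  also have "\<dots> = (\<Sum>\<omega>\<in>Pow ?E. ?w \<omega> * real (card {\<tau> \<in> ?VQ. \<omega> \<inter> ?B \<tau> = {}})
      * real (card {\<tau>' \<in> ?UQ. ?A \<tau>' \<subseteq> \<omega>}))"
    using fin by (simp add: sum_sum_if_conj)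
  also have "\<dots> = (\<Sum>\<omega>\<in>Pow ?E. coupling_weight (card Q) (card Q') a b \<omega>)"
    unfolding coupling_weight_def card_spins_const_on_clusters card_spins_const_on_dual_clusters
    by (simp add: mult_ac)
  finally show ?thesis .
qed

lemma fk_parameter:
  fixes a p :: real
  assumes "0 < a" "q' \<ge> 1" "p = real q' / (real q' + 1 / a - 1)"
  shows "a * real q' + 1 - a > 0"
    and "p = real q' * a / (a * real q' + 1 - a)"
    and "1 - p = (1 - a) / (a * real q' + 1 - a)"
proof -
  have "a \<le> a * real q'"
    using assms(1,2) by (simp add: mult_le_cancel_left1)
  then show pos: "a * real q' + 1 - a > 0" by linarith
  have "real q' + 1 / a - 1 = (a * real q' + 1 - a) / a"
    using assms(1) by (simp add: field_simps)
  then show p: "p = real q' * a / (a * real q' + 1 - a)"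
    unfolding assms(3) by simp
  show "1 - p = (1 - a) / (a * real q' + 1 - a)"
    unfolding p using pos by (simp add: field_simps)
qed

lemma fk_weight_eq_coupling_weight:
  assumes "genus_zero D alpha rho" "\<omega> \<subseteq> map_edges D alpha"
    and "0 < a" "q' \<ge> 1" "p = real q' / (real q' + 1 / a - 1)"
  shows "fk_weight D alpha rho (real q * real q') p \<omega> =
    real q' ^ (card (map_verts D rho) - 1) / (a * real q' + 1 - a) ^ card (map_edges D alpha)
    * coupling_weight q q' a (1 - a) \<omega>"
proof -
  let ?k = "card (clusters D alpha rho \<omega>)" and ?k' = "card (dual_clusters D alpha rho \<omega>)"
  let ?n = "card \<omega>" and ?m = "card (map_edges D alpha - \<omega>)" and ?v = "card (map_verts D rho)"
  define c where "c = 1 / (a * real q' + 1 - a)"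
  have p: "p = real q' * a * c" "1 - p = (1 - a) * c"
    using fk_parameter[OF assms(3-5)] unfolding c_def by simp_all
  have "?v \<ge> 1"
    unfolding map_verts_def using darts_nonempty finite_darts by (simp add: Suc_le_eq card_gt_0_iff)
  then have exps: "?k + ?n = ?k' + (?v - 1)"
    using euler_relation[OF assms(1,2)] by simp
  have "?n + ?m = card (map_edges D alpha)"
    using assms(2) finite_map_edges by (simp add: card_Diff_subset card_mono finite_subset)
  then have "fk_weight D alpha rho (real q * real q') p \<omega> =
      real q ^ ?k * real q' ^ (?k + ?n) * a ^ ?n * (1 - a) ^ ?m * c ^ card (map_edges D alpha)"
    unfolding fk_weight_def p(2) unfolding p(1) by (simp add: power_mult_distrib power_add[symmetric])
  also have "\<dots> = real q' ^ (?v - 1) * c ^ card (map_edges D alpha) * coupling_weight q q' a (1 - a) \<omega>"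
    unfolding exps coupling_weight_def by (simp add: power_add)
  finally show ?thesis unfolding c_def by (simp add: power_one_over)
qed

lemma fk_prob_eq_coupling_weight:
  assumes "genus_zero D alpha rho" "\<omega> \<subseteq> map_edges D alpha"
    and "0 < a" "q' \<ge> 1" "p = real q' / (real q' + 1 / a - 1)"
  shows "fk_prob D alpha rho (real q * real q') p \<omega> = coupling_weight q q' a (1 - a) \<omega>
    / (\<Sum>\<omega>'\<in>Pow (map_edges D alpha). coupling_weight q q' a (1 - a) \<omega>')"
proof -
  define K where "K = real q' ^ (card (map_verts D rho) - 1) / (a * real q' + 1 - a) ^ card (map_edges D alpha)"
  have "K \<noteq> 0"
    unfolding K_def using fk_parameter(1)[OF assms(3-5)] assms(4) by simp
  have "fk_weight D alpha rho (real q * real q') p \<omega>' = K * coupling_weight q q' a (1 - a) \<omega>'"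
    if "\<omega>' \<in> Pow (map_edges D alpha)" for \<omega>'
    unfolding K_def using fk_weight_eq_coupling_weight[OF assms(1) _ assms(3-5)] that by simp
  then show ?thesis
    unfolding fk_prob_def using assms(2) \<open>K \<noteq> 0\<close> by (simp add: sum_distrib_left[symmetric])
qed

lemma coupled_law_eq:
  assumes "genus_zero D alpha rho" "q \<ge> 1" "q' \<ge> 1"
    and "0 < a" "p = real q' / (real q' + 1 / a - 1)"
  shows "coupled_law D alpha rho q q' p \<sigma> \<sigma>' =
    (if in_Sigma D alpha rho \<sigma> \<sigma>'
     then a ^ card (eta_dual D alpha rho \<sigma>') * (1 - a) ^ card (eta_primal D alpha rho \<sigma>) else 0)
    / (\<Sum>\<omega>\<in>Pow (map_edges D alpha). coupling_weight q q' a (1 - a) \<omega>)"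
proof -
  let ?E = "map_edges D alpha" and ?A = "eta_dual D alpha rho \<sigma>'" and ?B = "eta_primal D alpha rho \<sigma>"
  let ?Z = "\<Sum>\<omega>\<in>Pow ?E. coupling_weight q q' a (1 - a) \<omega>"
  have "fk_prob D alpha rho (real q * real q') p \<omega>
      * cluster_spin_prob q (clusters D alpha rho \<omega>) \<sigma>
      * cluster_spin_prob q' (dual_clusters D alpha rho \<omega>) \<sigma>'
      = (if ?A \<subseteq> \<omega> \<and> \<omega> \<inter> ?B = {} then a ^ card \<omega> * (1 - a) ^ card (?E - \<omega>) else 0) / ?Z"
    if "\<omega> \<in> Pow ?E" for \<omega>
  proof -
    have "fk_prob D alpha rho (real q * real q') p \<omega> = coupling_weight q q' a (1 - a) \<omega> / ?Z"
      using that by (intro fk_prob_eq_coupling_weight assms) auto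
    then show ?thesis
      using assms(2,3)
      unfolding cluster_spin_prob_def const_on_clusters_iff const_on_dual_clusters_iff coupling_weight_def
      by auto
  qed
  then have "coupled_law D alpha rho q q' p \<sigma> \<sigma>' =
      (\<Sum>\<omega>\<in>Pow ?E. if ?A \<subseteq> \<omega> \<and> \<omega> \<inter> ?B = {} then a ^ card \<omega> * (1 - a) ^ card (?E - \<omega>) else 0) / ?Z"
    unfolding coupled_law_def by (simp add: sum_divide_distrib)
  also have "\<dots> = (if in_Sigma D alpha rho \<sigma> \<sigma>' then a ^ card ?A * (1 - a) ^ card ?B else 0) / ?Z"
    using sum_Pow_between_binomial[OF finite_map_edges eta_dual_subset eta_primal_subset, of a "1 - a"]
    unfolding in_Sigma_def by (simp add: Int_commute)
  finally show ?thesis .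
qed

end

theorem corollary2p3:
  fixes D :: "'d set" and alpha rho :: "'d \<Rightarrow> 'd"
    and Q Q' :: "complex set" and q q' :: nat and a b p :: real
  assumes map: "comb_map D alpha rho"
    and genus: "genus_zero D alpha rho"
    and q: "q \<ge> 1" and q': "q' \<ge> 1"
    and Q: "finite Q" "card Q = q" "uminus ` Q = Q"
    and Q': "finite Q'" "card Q' = q'" "uminus ` Q' = Q'"
    and a: "0 < a" "a < 1"
    and b: "b = 1 - a"
    and p: "p = real q' / (real q' + 1 / a - 1)"
  shows "\<forall>\<sigma> \<in> map_verts D rho \<rightarrow>\<^sub>E Q. \<forall>\<sigma>' \<in> map_faces D alpha rho \<rightarrow>\<^sub>E Q'.
           coupled_law D alpha rho q q' p \<sigma> \<sigma>' =
           (if in_Sigma D alpha rho \<sigma> \<sigma>'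
            then a ^ card (eta_dual D alpha rho \<sigma>') * b ^ card (eta_primal D alpha rho \<sigma>)
                 / (\<Sum>(\<tau>, \<tau>') \<in> {(\<tau>, \<tau>'). \<tau> \<in> map_verts D rho \<rightarrow>\<^sub>E Q \<and>
                                        \<tau>' \<in> map_faces D alpha rho \<rightarrow>\<^sub>E Q' \<and> in_Sigma D alpha rho \<tau> \<tau>'}.
                      a ^ card (eta_dual D alpha rho \<tau>') * b ^ card (eta_primal D alpha rho \<tau>))
            else 0)"
proof -
  interpret combinatorial_map D alpha rho
    using map by unfold_locales
  have "(\<Sum>(\<tau>, \<tau>') \<in> {(\<tau>, \<tau>'). \<tau> \<in> map_verts D rho \<rightarrow>\<^sub>E Q \<and>
            \<tau>' \<in> map_faces D alpha rho \<rightarrow>\<^sub>E Q' \<and> in_Sigma D alpha rho \<tau> \<tau>'}.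
          a ^ card (eta_dual D alpha rho \<tau>') * b ^ card (eta_primal D alpha rho \<tau>))
      = (\<Sum>\<omega>\<in>Pow (map_edges D alpha). coupling_weight q q' a (1 - a) \<omega>)"
    using sum_Sigma_eq_sum_coupling_weight[of a b Q Q'] b Q(1,2) Q'(1,2) by simp
  then show ?thesis
    using coupled_law_eq[OF genus q q' a(1) p] b by simp
qed

end
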